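(* If $X$ and $Y$ are weakly Alster spaces, then $X\times Y$ is weakly Alster.
   Context: All spaces are infinite ${\sf T}_1$ topological spaces. For a space $Z$, $\mathcal{G}_K$ is the family of all collections $\mathcal{U}$ of ${\sf G}_\delta$ subsets of $Z$ with $Z\notin\mathcal{U}$ such that each compact subset of $Z$ is contained in some member of $\mathcal{U}$. $Z$ is weakly Alster if every member of $\mathcal{G}_K$ (for $Z$) has a countable subcollection whose union is dense in $Z$. *)

theory Defs
  imports "HOL-Analysis.Analysis"
begin

definition GK_covers :: "'a topology \<Rightarrow> 'a set set set" where
  "GK_covers Z = {\<U>. (\<forall>U\<in>\<U>. gdelta_in Z U) \<and> topspace Z \<notin> \<U> \<and>
                      (\<forall>K. compactin Z K \<longrightarrow> (\<exists>U\<in>\<U>. K \<subseteq> U))}"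

definition weakly_Alster :: "'a topology \<Rightarrow> bool" where
  "weakly_Alster Z \<longleftrightarrow>
     (\<forall>\<U>\<in>GK_covers Z. \<exists>\<V>. \<V> \<subseteq> \<U> \<and> countable \<V> \<and> Z closure_of (\<Union>\<V>) = topspace Z)"

end

theory Submission
  imports Defs
begin

text \<open>Every member of a \<open>G\<^sub>K\<close>-cover of \<open>X \<times> Y\<close> contains a G-delta rectangle \<open>a K L \<times> b K L\<close>
  around each product \<open>K \<times> L\<close> of compact sets. Since \<open>X\<close> is weakly Alster, for fixed \<open>L\<close>
  countably many \<open>K\<close> make the sets \<open>a K L\<close> dense in \<open>X\<close>; the countable intersection \<open>W L\<close>
  of the matching sets \<open>b K L\<close> is again a G-delta neighbourhood of \<open>L\<close>, so countably many \<open>L\<close>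
  make the sets \<open>W L\<close> dense in \<open>Y\<close>. The countably many chosen rectangles then have dense union.\<close>

lemma Wallace_theorem_prod_topology_gdelta:
  assumes K: "compactin X K" and L: "compactin Y L"
    and G: "gdelta_in (prod_topology X Y) G" and KL: "K \<times> L \<subseteq> G"
  obtains A B where "gdelta_in X A" "gdelta_in Y B" "K \<subseteq> A" "L \<subseteq> B" "A \<times> B \<subseteq> G"
proof -
  obtain \<W> where "countable \<W>" and open_\<W>: "\<And>W. W \<in> \<W> \<Longrightarrow> openin (prod_topology X Y) W"
    and G_eq: "G = \<Inter>\<W>"
    using G unfolding gdelta_in_alt intersection_of_def by auto
  have "\<forall>W\<in>\<W>. \<exists>U V. openin X U \<and> openin Y V \<and> K \<subseteq> U \<and> L \<subseteq> V \<and> U \<times> V \<subseteq> W"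
  proof
    fix W assume "W \<in> \<W>"
    then have "K \<times> L \<subseteq> W"
      using KL G_eq by auto
    then show "\<exists>U V. openin X U \<and> openin Y V \<and> K \<subseteq> U \<and> L \<subseteq> V \<and> U \<times> V \<subseteq> W"
      using Wallace_theorem_prod_topology[OF K L open_\<W>[OF \<open>W \<in> \<W>\<close>]] by metis
  qed
  then obtain U V where UV: "\<And>W. W \<in> \<W> \<Longrightarrow>
      openin X (U W) \<and> openin Y (V W) \<and> K \<subseteq> U W \<and> L \<subseteq> V W \<and> U W \<times> V W \<subseteq> W"
    by metis
  define A where "A = \<Inter>(insert (topspace X) (U ` \<W>))"
  define B where "B = \<Inter>(insert (topspace Y) (V ` \<W>))"
  show thesis
  proof
    show "gdelta_in X A" "gdelta_in Y B"
      unfolding A_def B_def using \<open>countable \<W>\<close> UV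
      by (intro gdelta_in_Inter; auto intro: open_imp_gdelta_in)+
    show "K \<subseteq> A" "L \<subseteq> B"
      using UV compactin_subset_topspace[OF K] compactin_subset_topspace[OF L]
      unfolding A_def B_def by auto
    show "A \<times> B \<subseteq> G"
      unfolding A_def B_def G_eq using UV by fastforce
  qed
qed

lemma GK_covers_prod_topology_rectangle:
  assumes "\<U> \<in> GK_covers (prod_topology X Y)" "compactin X K" "compactin Y L"
  obtains U A B where "U \<in> \<U>" "gdelta_in X A" "gdelta_in Y B" "K \<subseteq> A" "L \<subseteq> B" "A \<times> B \<subseteq> U"
proof -
  obtain U where "U \<in> \<U>" "K \<times> L \<subseteq> U"
    using assms compactin_Times unfolding GK_covers_def by blast
  moreover have "gdelta_in (prod_topology X Y) U"
    using assms(1) \<open>U \<in> \<U>\<close> unfolding GK_covers_def by blast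
  ultimately show thesis
    using Wallace_theorem_prod_topology_gdelta[OF assms(2,3)] that by metis
qed

text \<open>If some \<open>f K\<close> is the whole space, the \<open>G\<^sub>K\<close>-condition \<open>Z \<notin> \<U>\<close> fails; then a single
  compact set already does the job.\<close>

lemma weakly_Alster_dense_image:
  assumes "weakly_Alster Z"
    and gdelta: "\<And>K. compactin Z K \<Longrightarrow> gdelta_in Z (f K)"
    and covers: "\<And>K. compactin Z K \<Longrightarrow> K \<subseteq> f K"
  obtains \<K> where "countable \<K>" "\<And>K. K \<in> \<K> \<Longrightarrow> compactin Z K"
    "Z closure_of (\<Union>K\<in>\<K>. f K) = topspace Z"
proof (cases "topspace Z \<in> f ` {K. compactin Z K}")
  case True
  then obtain K0 where "compactin Z K0" "f K0 = topspace Z"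
    by auto
  then show thesis
    by (intro that[of "{K0}"]) auto
next
  case False
  then have "f ` {K. compactin Z K} \<in> GK_covers Z"
    unfolding GK_covers_def using gdelta covers by blast
  then obtain \<V> where "\<V> \<subseteq> f ` {K. compactin Z K}" "countable \<V>"
    and "Z closure_of (\<Union>\<V>) = topspace Z"
    using \<open>weakly_Alster Z\<close> unfolding weakly_Alster_def by blast
  moreover obtain \<K> where "countable \<K>" "\<K> \<subseteq> {K. compactin Z K}" "\<V> = f ` \<K>"
    using countable_subset_image[of \<V> f "{K. compactin Z K}"] calculation by blast
  ultimately show thesis
    by (intro that[of \<K>]) auto
qed

lemma prod_topology_dense_Union_Times:
  assumes dense_B: "Y closure_of (\<Union>i\<in>I. B i) = topspace Y"
    and dense_A: "\<And>i. i \<in> I \<Longrightarrow> X closure_of (\<Union>j\<in>J i. A i j) = topspace X"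
  shows "prod_topology X Y closure_of (\<Union>i\<in>I. \<Union>j\<in>J i. A i j \<times> B i)
           = topspace (prod_topology X Y)"
  unfolding dense_intersects_open
proof (intro allI impI)
  fix T assume T: "openin (prod_topology X Y) T \<and> T \<noteq> {}"
  then obtain x y where "(x, y) \<in> T"
    by auto
  then obtain Q P where "openin X Q" "openin Y P" "x \<in> Q" "y \<in> P" "Q \<times> P \<subseteq> T"
    using T openin_prod_topology_alt by metis
  then obtain i y' where i: "i \<in> I" "y' \<in> B i" "y' \<in> P"
    using dense_B unfolding dense_intersects_open by blast
  then obtain j x' where "j \<in> J i" "x' \<in> A i j" "x' \<in> Q"
    using dense_A[OF \<open>i \<in> I\<close>] \<open>openin X Q\<close> \<open>x \<in> Q\<close> unfolding dense_intersects_open by blast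
  with i \<open>Q \<times> P \<subseteq> T\<close> show "(\<Union>i\<in>I. \<Union>j\<in>J i. A i j \<times> B i) \<inter> T \<noteq> {}"
    by blast
qed

lemma dense_closure_of_superset:
  assumes "X closure_of S = topspace X" "S \<subseteq> T"
  shows "X closure_of T = topspace X"
  using closure_of_mono[OF assms(2), of X] closure_of_subset_topspace[of X T] assms(1) by simp

lemma weakly_Alster_prod_topology:
  assumes "weakly_Alster X" and "weakly_Alster Y"
  shows "weakly_Alster (prod_topology X Y)"
  unfolding weakly_Alster_def
proof
  fix \<U> assume \<U>: "\<U> \<in> GK_covers (prod_topology X Y)"
  have "\<exists>U A B. U \<in> \<U> \<and> gdelta_in X A \<and> gdelta_in Y B \<and> K \<subseteq> A \<and> L \<subseteq> B \<and> A \<times> B \<subseteq> U"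
    if "compactin X K" "compactin Y L" for K L
    using GK_covers_prod_topology_rectangle[OF \<U> that] by metis
  then obtain u a b where uab: "\<And>K L. compactin X K \<Longrightarrow> compactin Y L \<Longrightarrow>
      u K L \<in> \<U> \<and> gdelta_in X (a K L) \<and> gdelta_in Y (b K L) \<and>
      K \<subseteq> a K L \<and> L \<subseteq> b K L \<and> a K L \<times> b K L \<subseteq> u K L"
    by metis
  have "\<exists>\<K>. countable \<K> \<and> (\<forall>K\<in>\<K>. compactin X K) \<and>
          X closure_of (\<Union>K\<in>\<K>. a K L) = topspace X" if "compactin Y L" for L
    using weakly_Alster_dense_image[OF \<open>weakly_Alster X\<close>, of "\<lambda>K. a K L"] uab[OF _ that]
    by metis
  then obtain kk where kk: "\<And>L. compactin Y L \<Longrightarrow> countable (kk L) \<and>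
      (\<forall>K\<in>kk L. compactin X K) \<and> X closure_of (\<Union>K\<in>kk L. a K L) = topspace X"
    by metis
  define W where "W L = \<Inter>(insert (topspace Y) ((\<lambda>K. b K L) ` kk L))" for L
  obtain \<L> where "countable \<L>" and compact_\<L>: "\<And>L. L \<in> \<L> \<Longrightarrow> compactin Y L"
    and dense_W: "Y closure_of (\<Union>L\<in>\<L>. W L) = topspace Y"
  proof (rule weakly_Alster_dense_image[OF \<open>weakly_Alster Y\<close>, of W])
    show "gdelta_in Y (W L)" if "compactin Y L" for L
      unfolding W_def
      by (rule gdelta_in_Inter) (use kk[OF that] uab[OF _ that] in auto)
    show "L \<subseteq> W L" if "compactin Y L" for L
      unfolding W_def using kk[OF that] uab[OF _ that] compactin_subset_topspace[OF that] by auto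
  qed blast
  define \<V> where "\<V> = (\<Union>L\<in>\<L>. (\<lambda>K. u K L) ` kk L)"
  have rectangle_in_u: "a K L \<times> W L \<subseteq> u K L" if "L \<in> \<L>" "K \<in> kk L" for K L
  proof -
    have "compactin Y L" "compactin X K"
      using that compact_\<L> kk by auto
    moreover have "W L \<subseteq> b K L"
      unfolding W_def using that by auto
    ultimately show ?thesis
      using uab by blast
  qed
  have dense_rectangles: "prod_topology X Y closure_of (\<Union>L\<in>\<L>. \<Union>K\<in>kk L. a K L \<times> W L)
      = topspace (prod_topology X Y)"
    by (rule prod_topology_dense_Union_Times[OF dense_W]) (use kk compact_\<L> in blast)
  have rectangles_in_\<V>: "(\<Union>L\<in>\<L>. \<Union>K\<in>kk L. a K L \<times> W L) \<subseteq> \<Union>\<V>"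
    unfolding \<V>_def using rectangle_in_u by blast
  have "prod_topology X Y closure_of \<Union>\<V> = topspace (prod_topology X Y)"
    by (rule dense_closure_of_superset[OF dense_rectangles rectangles_in_\<V>])
  moreover have "\<V> \<subseteq> \<U>"
    unfolding \<V>_def using compact_\<L> kk uab by blast
  moreover have "countable \<V>"
    unfolding \<V>_def using \<open>countable \<L>\<close> compact_\<L> kk by (intro countable_UN) auto
  ultimately show "\<exists>\<V>\<subseteq>\<U>. countable \<V> \<and> prod_topology X Y closure_of \<Union>\<V> = topspace (prod_topology X Y)"
    by blast
qed

text \<open>The \<open>T\<^sub>1\<close> and infinitude hypotheses are standing conventions of the paper; the
  product theorem does not need them.\<close>

theorem theorem5p11:
  fixes X :: "'a topology" and Y :: "'b topology"
  assumes "t1_space X" and "infinite (topspace X)"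
      and "t1_space Y" and "infinite (topspace Y)"
      and "weakly_Alster X" and "weakly_Alster Y"
  shows "weakly_Alster (prod_topology X Y)"
  using weakly_Alster_prod_topology \<open>weakly_Alster X\<close> \<open>weakly_Alster Y\<close> by blast

end
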